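(* In any execution of $\mathcal{U}$, for every operation $o$: if $h(o) = (t(o), x)$ for some $x$ at time $T$, and $h(o) = (t, y)$ for some $y$ with $t \neq t(o)$ at a time $T' > T$, then there is a time $T^* < T'$ at which $o$ is done.
   Context: Model: an asynchronous shared-memory system with possibly infinitely many processes, any of which may crash, communicating via atomic shared objects. A fetch-and-increment (F\&I) object stores an integer; F\&I$(C)$ atomically returns the current value and increments it. A generalized-compare-and-swap (GCAS) object $O$ stores a value and supports Read$(O)$ and GCAS$(c, O, v_1, v_2)$, which atomically does: if $c(\text{current value of } O, v_1)$ holds then set $O := v_2$ and return true, else return false. Tuples are compared componentwise for $=$; GCAS$(>, A, (t,-,-), v)$ succeeds iff the time field of $A$ is strictly greater than $t$. Implemented type $\mathcal{T} = (OP, RES, Q, \delta)$ with initial state $s_0$; a procedure $apply_{\mathcal{T}}(o,s)$ returns some $(s',r)$ with $(s,o,s',r)\in\delta$. $NULL$ is a value different from every response of $\mathcal{T}$, and $NOOP$ is a name different from every operation of $\mathcal{T}$. Algorithm $\mathcal{U}$: each process $p$ owns a GCAS object $H_p$ with fields $(time, response)$. Shared objects: F\&I object $C$, initially $1$; GCAS object $A$ with fields $(time, op, ptr)$, initially $(0, NOOP, h(NOOP))$, where $h(NOOP)$ is a pointer to an immutable location containing $(0,\perp)$; GCAS object $S$ with fields $(time, state, response, ptr)$, initially $(0, s_0, \perp, h(NOOP))$. Process $p$ performs operation $o$ by calling DoOp$(o)$: (1) DoOp$(o)$ invoked; (2) $t := $ F\&I$(C)$; (3) $H_p := (t, NULL)$;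 (4) while $H_p = (t, NULL)$ do: (5) $(t^*, s^*, r^*, roptr^* ) := S$; (6) GCAS$(=, *roptr^*, (t^*, NULL), (t^*, r^* ))$; (7) GCAS$(>, A, (t,-,-), (t, o, \&H_p))$; (8) $(t', o', roptr') := A$; (9) $(\hat t, \hat r) := *roptr'$; (10) if $(\hat t,\hat r) = (t', NULL)$ then (11) $(s', r') := apply_{\mathcal{T}}(o', s^* )$; (12) GCAS$(=, S, (t^*,s^*,r^*,roptr^* ), (t', s', r', roptr'))$; (13) else GCAS$(=, A, (t', o', roptr'), (t, o, \&H_p))$; end while; (14) return $H_p.response$. Notation: an "operation" $o$ means one invocation of DoOp$(o)$. $p(o)$ is the process executing it; $t(o)$ is the value returned by its F\&I at line 2, or $\infty$ if line 2 has not been executed; $h(o)$ is $H_{p(o)}$. For $NOOP$: $t(NOOP)=0$ and $h(NOOP)$ is the immutable location containing $(0,\perp)$. Operation $o$ is complete at time $T$ if $p(o)$ executed line 14 in DoOp$(o)$ at some time $\le T$. Operation $o$ is done at time $T$ if at some time $T'\le T$, $h(o) = (t(o), r)$ with $r \neq NULL$. *)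

theory Defs
  imports Main
begin

text \<open>Processes are elements of an arbitrary (possibly infinite) type 'p.
  Each atomic shared-memory access / local step of the pseudocode is one step.\<close>

datatype 'r resp = Null | Bot | Val 'r

datatype 'op aop = NOOP | Op 'op

text \<open>Pointers: h(NOOP) (an immutable location holding (0,bottom)) or the address of H_q.\<close>
datatype 'p ptr = NoopPtr | HPtr 'p

text \<open>Program counter: Idle = ready to invoke DoOp (line 1); Lk = about to execute line k.\<close>
datatype pcv = Idle | L2 | L3 | L4 | L5 | L6 | L7 | L8 | L9 | L10 | L11 | L12 | L13 | L14

record ('p,'op,'s,'r) loc =
  lo :: 'op
  lt :: nat
  lS :: "nat \<times> 's \<times> 'r resp \<times> 'p ptr"
  lA :: "nat \<times> 'op aop \<times> 'p ptr"
  lH :: "nat \<times> 'r resp"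
  lApp :: "'s \<times> 'r resp"

record ('p,'op,'s,'r) conf =
  Cv :: nat
  Av :: "nat \<times> 'op aop \<times> 'p ptr"
  Sv :: "nat \<times> 's \<times> 'r resp \<times> 'p ptr"
  Hv :: "'p \<Rightarrow> nat \<times> 'r resp"
  pc :: "'p \<Rightarrow> pcv"
  inv :: "'p \<Rightarrow> nat"   \<comment> \<open>number of DoOp invocations started by each process\<close>
  lc :: "'p \<Rightarrow> ('p,'op,'s,'r) loc"

definition deref :: "('p,'op,'s,'r) conf \<Rightarrow> 'p ptr \<Rightarrow> nat \<times> 'r resp" where
  "deref c x = (case x of NoopPtr \<Rightarrow> (0, Bot) | HPtr q \<Rightarrow> Hv c q)"

definition init :: "'s \<Rightarrow> ('p,'op,'s,'r) conf" where
  "init s0 = \<lparr> Cv = 1, Av = (0, NOOP, NoopPtr), Sv = (0, s0, Bot, NoopPtr),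
     Hv = (\<lambda>_. (0, Bot)), pc = (\<lambda>_. Idle), inv = (\<lambda>_. 0), lc = (\<lambda>_. undefined) \<rparr>"

text \<open>One atomic step of process p.  delta is the transition relation of T,
  as a set of tuples (s, o, s', r).\<close>
definition ustep :: "('s \<times> 'op \<times> 's \<times> 'r) set \<Rightarrow> 'p \<Rightarrow> ('p,'op,'s,'r) conf \<Rightarrow> ('p,'op,'s,'r) conf \<Rightarrow> bool" where
  "ustep \<delta> p c c' = (let l = lc c p; goto = (\<lambda>n. (pc c)(p := n)); setl = (\<lambda>l'. (lc c)(p := l')) in
    case pc c p of
      Idle \<Rightarrow> (\<exists>op. c' = c\<lparr>pc := goto L2, inv := (inv c)(p := Suc (inv c p)), lc := setl (l\<lparr>lo := op\<rparr>)\<rparr>)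
    | L2 \<Rightarrow> c' = c\<lparr>Cv := Suc (Cv c), pc := goto L3, lc := setl (l\<lparr>lt := Cv c\<rparr>)\<rparr>
    | L3 \<Rightarrow> c' = c\<lparr>Hv := (Hv c)(p := (lt l, Null)), pc := goto L4\<rparr>
    | L4 \<Rightarrow> c' = c\<lparr>pc := goto (if Hv c p = (lt l, Null) then L5 else L14)\<rparr>
    | L5 \<Rightarrow> c' = c\<lparr>pc := goto L6, lc := setl (l\<lparr>lS := Sv c\<rparr>)\<rparr>
    | L6 \<Rightarrow> (case lS l of (ts, ss, rs, rp) \<Rightarrow>
              c' = c\<lparr>Hv := (case rp of NoopPtr \<Rightarrow> Hv c
                                 | HPtr q \<Rightarrow> (if Hv c q = (ts, Null) then (Hv c)(q := (ts, rs)) else Hv c)),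
                     pc := goto L7\<rparr>)
    | L7 \<Rightarrow> c' = c\<lparr>Av := (if fst (Av c) > lt l then (lt l, Op (lo l), HPtr p) else Av c), pc := goto L8\<rparr>
    | L8 \<Rightarrow> c' = c\<lparr>pc := goto L9, lc := setl (l\<lparr>lA := Av c\<rparr>)\<rparr>
    | L9 \<Rightarrow> c' = c\<lparr>pc := goto L10, lc := setl (l\<lparr>lH := deref c (snd (snd (lA l)))\<rparr>)\<rparr>
    | L10 \<Rightarrow> c' = c\<lparr>pc := goto (if lH l = (fst (lA l), Null) then L11 else L13)\<rparr>
    | L11 \<Rightarrow> (case fst (snd (lA l)) of
               Op o' \<Rightarrow> (\<exists>s' r'. (fst (snd (lS l)), o', s', r') \<in> \<delta> \<and>
                          c' = c\<lparr>pc := goto L12, lc := setl (l\<lparr>lApp := (s', Val r')\<rparr>)\<rparr>)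
             | NOOP \<Rightarrow> c' = c\<lparr>pc := goto L12, lc := setl (l\<lparr>lApp := (fst (snd (lS l)), Bot)\<rparr>)\<rparr>)
    | L12 \<Rightarrow> c' = c\<lparr>Sv := (if Sv c = lS l
                           then (fst (lA l), fst (lApp l), snd (lApp l), snd (snd (lA l))) else Sv c),
                   pc := goto L4\<rparr>
    | L13 \<Rightarrow> c' = c\<lparr>Av := (if Av c = lA l then (lt l, Op (lo l), HPtr p) else Av c), pc := goto L4\<rparr>
    | L14 \<Rightarrow> c' = c\<lparr>pc := goto Idle\<rparr>)"

text \<open>Crashed processes are simply never scheduled again.\<close>
definition is_exec :: "('s \<times> 'op \<times> 's \<times> 'r) set \<Rightarrow> 's \<Rightarrow> (nat \<Rightarrow> ('p,'op,'s,'r) conf) \<Rightarrow> (nat \<Rightarrow> 'p option) \<Rightarrow> bool" where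
  "is_exec \<delta> s0 E sched =
     (E 0 = init s0 \<and>
      (\<forall>T. case sched T of None \<Rightarrow> E (Suc T) = E T | Some p \<Rightarrow> ustep \<delta> p (E T) (E (Suc T))))"

text \<open>An operation o is identified by (p, k): the k-th invocation of DoOp by process p.
  tOp E sched p k v: the F\&I at line 2 of that invocation returned v, i.e. t(o) = v
  (t(o) is infinite iff there is no such v).\<close>
definition tOp :: "(nat \<Rightarrow> ('p,'op,'s,'r) conf) \<Rightarrow> (nat \<Rightarrow> 'p option) \<Rightarrow> 'p \<Rightarrow> nat \<Rightarrow> nat \<Rightarrow> bool" where
  "tOp E sched p k v = (\<exists>T. sched T = Some p \<and> pc (E T) p = L2 \<and> inv (E T) p = k \<and> Cv (E T) = v)"

definition done_at :: "(nat \<Rightarrow> ('p,'op,'s,'r) conf) \<Rightarrow> (nat \<Rightarrow> 'p option) \<Rightarrow> 'p \<Rightarrow> nat \<Rightarrow> nat \<Rightarrow> bool" where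
  "done_at E sched p k T = (\<exists>v. tOp E sched p k v \<and> (\<exists>T'\<le>T. \<exists>r. Hv (E T') p = (v, r) \<and> r \<noteq> Null))"

end

theory Submission imports Defs begin

text \<open>After its F\&I returns \<open>v\<close>, process \<open>p\<close> is announcing: it is about to write \<open>(v, NULL)\<close>
  into \<open>H\<^sub>p\<close>, whose time field is still below the counter and hence below \<open>v\<close>.  Once written,
  \<open>p\<close> stays in the loop of lines 4--13 with \<open>H\<^sub>p\<close> carrying time \<open>v\<close>: other processes only ever
  replace a \<open>NULL\<close> response, never the time field, and \<open>p\<close> leaves the loop only at line 4
  after seeing \<open>H\<^sub>p \<noteq> (v, NULL)\<close>, i.e. when the operation is done.\<close>

definition loop_lines :: "pcv set" where
  "loop_lines = {L4, L5, L6, L7, L8, L9, L10, L11, L12, L13}"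

definition announcing :: "('p,'op,'s,'r) conf \<Rightarrow> 'p \<Rightarrow> nat \<Rightarrow> bool" where
  "announcing c p v \<longleftrightarrow> pc c p = L3 \<and> lt (lc c p) = v \<and> fst (Hv c p) < v"

definition in_loop :: "('p,'op,'s,'r) conf \<Rightarrow> 'p \<Rightarrow> nat \<Rightarrow> bool" where
  "in_loop c p v \<longleftrightarrow> pc c p \<in> loop_lines \<and> lt (lc c p) = v \<and> fst (Hv c p) = v"

definition has_response :: "('p,'op,'s,'r) conf \<Rightarrow> 'p \<Rightarrow> nat \<Rightarrow> bool" where
  "has_response c p v \<longleftrightarrow> (\<exists>r. Hv c p = (v, r) \<and> r \<noteq> Null)"

definition step_or_stutter :: "('s \<times> 'op \<times> 's \<times> 'r) set \<Rightarrow> ('p,'op,'s,'r) conf \<Rightarrow> ('p,'op,'s,'r) conf \<Rightarrow> bool" where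
  "step_or_stutter \<delta> c c' \<longleftrightarrow> c' = c \<or> (\<exists>q. ustep \<delta> q c c')"

lemma ustep_Cv_mono:
  assumes "ustep \<delta> q c c'"
  shows "Cv c \<le> Cv c'"
  using assms unfolding ustep_def Let_def
  by (cases "pc c q") (auto split: prod.splits ptr.splits aop.splits)

lemma ustep_other_process:
  assumes "ustep \<delta> q c c'" "q \<noteq> p"
  shows "pc c' p = pc c p \<and> lc c' p = lc c p \<and> fst (Hv c' p) = fst (Hv c p)"
  using assms unfolding ustep_def Let_def
  by (cases "pc c q") (auto split: prod.splits ptr.splits aop.splits)

lemma ustep_L2:
  assumes "ustep \<delta> p c c'" "pc c p = L2"
  shows "pc c' p = L3 \<and> lt (lc c' p) = Cv c \<and> Hv c' p = Hv c p"
  using assms unfolding ustep_def Let_def by simp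

lemma ustep_L3:
  assumes "ustep \<delta> p c c'" "pc c p = L3"
  shows "pc c' p = L4 \<and> lt (lc c' p) = lt (lc c p) \<and> Hv c' p = (lt (lc c p), Null)"
  using assms unfolding ustep_def Let_def by simp

lemma ustep_loop_lines:
  assumes "ustep \<delta> p c c'" "pc c p \<in> loop_lines"
  shows "lt (lc c' p) = lt (lc c p) \<and> fst (Hv c' p) = fst (Hv c p) \<and>
    (pc c' p \<in> loop_lines \<or> Hv c p \<noteq> (lt (lc c p), Null))"
  using assms unfolding ustep_def Let_def loop_lines_def
  by (cases "pc c p") (auto split: prod.splits ptr.splits aop.splits)

definition tickets_below_counter :: "('p,'op,'s,'r) conf \<Rightarrow> 'p \<Rightarrow> bool" where
  "tickets_below_counter c p \<longleftrightarrow>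
     fst (Hv c p) < Cv c \<and> (pc c p = L3 \<longrightarrow> lt (lc c p) < Cv c)"

lemma ustep_tickets_below_counter:
  assumes "ustep \<delta> q c c'" "tickets_below_counter c p"
  shows "tickets_below_counter c' p"
proof (cases "q = p")
  case True
  then show ?thesis using assms unfolding tickets_below_counter_def ustep_def Let_def
    by (cases "pc c p") (auto split: prod.splits ptr.splits aop.splits)
next
  case False
  then show ?thesis
    using assms ustep_other_process[OF assms(1) False] ustep_Cv_mono[OF assms(1)]
    unfolding tickets_below_counter_def by auto
qed

lemma announcing_step:
  assumes "step_or_stutter \<delta> c c'" "announcing c p v"
  shows "announcing c' p v \<or> in_loop c' p v"
proof -
  have "announcing c' p v \<or> in_loop c' p v" if "ustep \<delta> q c c'" for q
  proof (cases "q = p")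
    case True
    then show ?thesis using that assms(2) ustep_L3[of \<delta> p c c']
      unfolding announcing_def in_loop_def loop_lines_def by auto
  next
    case False
    then show ?thesis using that assms(2) ustep_other_process[of \<delta> q c c' p]
      unfolding announcing_def by auto
  qed
  then show ?thesis using assms unfolding step_or_stutter_def by auto
qed

lemma in_loop_step:
  assumes "step_or_stutter \<delta> c c'" "in_loop c p v"
  shows "in_loop c' p v \<or> has_response c p v"
proof -
  have "in_loop c' p v \<or> has_response c p v" if "ustep \<delta> q c c'" for q
  proof (cases "q = p")
    case True
    then show ?thesis using that assms(2) ustep_loop_lines[of \<delta> p c c']
      unfolding in_loop_def has_response_def by (cases "Hv c p") auto
  next
    case False
    then show ?thesis using that assms(2) ustep_other_process[of \<delta> q c c' p]
      unfolding in_loop_def by auto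
  qed
  then show ?thesis using assms unfolding step_or_stutter_def by auto
qed

lemma announcing_or_in_loop_step:
  assumes "step_or_stutter \<delta> c c'" "announcing c p v \<or> in_loop c p v"
  shows "(announcing c' p v \<or> in_loop c' p v) \<or> has_response c p v"
  using assms(2) announcing_step[OF assms(1)] in_loop_step[OF assms(1)] by blast

lemma is_exec_step:
  assumes "is_exec \<delta> s0 E sched"
  shows "step_or_stutter \<delta> (E S) (E (Suc S))"
proof (cases "sched S")
  case None
  then show ?thesis using assms unfolding is_exec_def step_or_stutter_def by (metis option.simps(4))
next
  case (Some q)
  then show ?thesis using assms unfolding is_exec_def step_or_stutter_def by (metis option.simps(5))
qed

lemma is_exec_scheduled:
  assumes "is_exec \<delta> s0 E sched" "sched S = Some p"
  shows "ustep \<delta> p (E S) (E (Suc S))"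
  using assms unfolding is_exec_def by (metis option.simps(5))

lemma is_exec_Cv_mono:
  assumes "is_exec \<delta> s0 E sched" "S \<le> S'"
  shows "Cv (E S) \<le> Cv (E S')"
  using assms(2)
proof (induction rule: dec_induct)
  case (step n)
  then show ?case using is_exec_step[OF assms(1), of n] ustep_Cv_mono
    unfolding step_or_stutter_def by (metis order_trans)
qed simp

lemma is_exec_tickets_below_counter:
  assumes "is_exec \<delta> s0 E sched"
  shows "tickets_below_counter (E S) p"
proof (induction S)
  case 0
  then show ?case using assms by (simp add: is_exec_def init_def tickets_below_counter_def)
next
  case (Suc S)
  then show ?case using is_exec_step[OF assms, of S] ustep_tickets_below_counter
    unfolding step_or_stutter_def by metis
qed

lemma is_exec_persists_until:
  assumes "is_exec \<delta> s0 E sched"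
    and "\<And>c c'. step_or_stutter \<delta> c c' \<Longrightarrow> P c \<Longrightarrow> P c' \<or> Q c"
    and "P (E S0)" "S0 \<le> S"
  shows "P (E S) \<or> (\<exists>S' < S. Q (E S'))"
  using assms(4)
proof (induction rule: dec_induct)
  case (step n)
  then show ?case using assms(2)[OF is_exec_step[OF assms(1), of n]] less_SucI by blast
qed (use assms(3) in simp)

theorem mainTheorem5:
  fixes \<delta> :: "('s \<times> 'op \<times> 's \<times> 'r) set" and s0 :: 's
    and E :: "nat \<Rightarrow> ('p,'op,'s,'r) conf" and sched :: "nat \<Rightarrow> 'p option"
    and p :: 'p and k :: nat and v :: nat
    and T T' t :: nat and x y :: "'r resp"
  assumes "is_exec \<delta> s0 E sched"
    and "tOp E sched p k v"
    and "Hv (E T) p = (v, x)"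
    and "Hv (E T') p = (t, y)"
    and "t \<noteq> v"
    and "T < T'"
  shows "\<exists>Ts < T'. done_at E sched p k Ts"
proof -
  note exec = assms(1) and below = is_exec_tickets_below_counter[OF assms(1)]
  from assms(2) obtain T0 where T0: "sched T0 = Some p" "pc (E T0) p = L2" "Cv (E T0) = v"
    unfolding tOp_def by blast
  have announced: "announcing (E (Suc T0)) p v \<or> in_loop (E (Suc T0)) p v"
    using ustep_L2[OF is_exec_scheduled[OF exec T0(1)] T0(2)] below[of T0 p] T0(3)
    unfolding announcing_def tickets_below_counter_def by simp
  have started_before: "Suc T0 \<le> T"
  proof (rule ccontr)
    assume "\<not> Suc T0 \<le> T"
    then have "Cv (E T) \<le> v" using is_exec_Cv_mono[OF exec, of T T0] T0(3) by simp
    then show False using below[of T p] assms(3) unfolding tickets_below_counter_def by simp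
  qed
  have "(announcing (E T) p v \<or> in_loop (E T) p v) \<or> (\<exists>S < T. has_response (E S) p v)"
    using is_exec_persists_until[where P = "\<lambda>c. announcing c p v \<or> in_loop c p v"
        and Q = "\<lambda>c. has_response c p v", OF exec announcing_or_in_loop_step announced started_before] .
  then have "in_loop (E T) p v \<or> (\<exists>S < T'. has_response (E S) p v)"
    using assms(3,6) unfolding announcing_def by auto
  moreover have "in_loop (E T) p v \<Longrightarrow> in_loop (E T') p v \<or> (\<exists>S < T'. has_response (E S) p v)"
    using is_exec_persists_until[where P = "\<lambda>c. in_loop c p v" and Q = "\<lambda>c. has_response c p v",
        OF exec in_loop_step] assms(6) by simp
  moreover have "\<not> in_loop (E T') p v"
    using assms(4,5) unfolding in_loop_def by simp
  ultimately obtain S where "S < T'" "has_response (E S) p v"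
    by blast
  then show ?thesis using assms(2) unfolding done_at_def has_response_def by blast
qed

end
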